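(* Let $H$ be a finite-dimensional complex Hilbert space, $h_1,h_2$ subspaces of $H$, $\ket s\in H$ a unit vector, and $p[\Pi(h)]=\bra s\Pi(h)\ket s$. Set $S=p[\Pi(h_1)]+p[\Pi(h_2)]+\bra s\mathfrak D(h_1,h_2)\ket s$, $\mathfrak B_U=S$ and, when $p[\Pi(h_1\vee h_2)]>0$, $\mathfrak B_L=\dfrac{S^2}{S+2p[\Pi(h_1\wedge h_2)]}$. Then (1) $p[\Pi(h_1\vee h_2)]\le \mathfrak B_U$, and if $p[\Pi(h_1\vee h_2)]>0$ then $\mathfrak B_L\le p[\Pi(h_1\vee h_2)]$. (2) If at least one of the following holds: (i) $\Pi(h_1)$ and $\Pi(h_2)$ commute; (ii) $\ket s\in h_1\wedge h_2$; (iii) $\ket s\in (h_1\vee h_2)^\perp=h_1^\perp\wedge h_2^\perp$; then $\bra s\mathfrak D(h_1,h_2)\ket s=0$ and the classical Boole inequality $p[\Pi(h_1\vee h_2)]\le p[\Pi(h_1)]+p[\Pi(h_2)]$ holds, and moreover, whenever $p[\Pi(h_1)]+p[\Pi(h_2)]+2p[\Pi(h_1\wedge h_2)]>0$, the classical Chung–Erdős inequality $\dfrac{(p[\Pi(h_1)]+p[\Pi(h_2)])^2}{p[\Pi(h_1)]+p[\Pi(h_2)]+2p[\Pi(h_1\wedge h_2)]}\le p[\Pi(h_1\vee h_2)]$ holds.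
   Context: For subspaces $h,h'$ of $H$: $h\wedge h'=h\cap h'$, $h\vee h'=\mathrm{span}(h\cup h')$, $h^\perp$ is the orthogonal complement, and $\Pi(h)$ is the orthogonal projector onto $h$. Define the operator $\mathfrak D(h_1,h_2)=\Pi(h_1\vee h_2)-\Pi(h_1)-\Pi(h_2)+\Pi(h_1\wedge h_2)$. *)

theory Defs
  imports "HOL-Analysis.Analysis"
begin

text \<open>The finite-dimensional complex Hilbert space H is modelled as complex^'n
  (arbitrary finite index type 'n) with the standard Hermitian inner product,
  antilinear in the first argument (bra-ket convention).\<close>

definition cinner :: "complex^'n \<Rightarrow> complex^'n \<Rightarrow> complex" where
  "cinner x y = (\<Sum>i\<in>UNIV. cnj (x $ i) * y $ i)"

definition csubspace :: "(complex^'n) set \<Rightarrow> bool" where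
  "csubspace S \<longleftrightarrow> 0 \<in> S \<and> (\<forall>x\<in>S. \<forall>y\<in>S. x + y \<in> S) \<and> (\<forall>c x. x \<in> S \<longrightarrow> c *s x \<in> S)"

definition orth :: "(complex^'n) set \<Rightarrow> (complex^'n) set" where
  "orth S = {x. \<forall>y\<in>S. cinner y x = 0}"

definition smeet :: "(complex^'n) set \<Rightarrow> (complex^'n) set \<Rightarrow> (complex^'n) set" where
  "smeet h h' = h \<inter> h'"

definition sjoin :: "(complex^'n) set \<Rightarrow> (complex^'n) set \<Rightarrow> (complex^'n) set" where
  "sjoin h h' = csubspace hull (h \<union> h')"

definition proj :: "(complex^'n) set \<Rightarrow> complex^'n \<Rightarrow> complex^'n" where
  "proj h x = (THE y. y \<in> h \<and> x - y \<in> orth h)"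

definition Dop :: "(complex^'n) set \<Rightarrow> (complex^'n) set \<Rightarrow> complex^'n \<Rightarrow> complex^'n" where
  "Dop h1 h2 x = proj (sjoin h1 h2) x - proj h1 x - proj h2 x + proj (smeet h1 h2) x"

definition pr :: "(complex^'n) set \<Rightarrow> complex^'n \<Rightarrow> real" where
  "pr h s = Re (cinner s (proj h s))"

end

theory Submission imports Defs begin

text \<open>Writing \<open>P\<close> for orthogonal projectors, \<open>\<langle>s|\<DD>(h\<^sub>1,h\<^sub>2)|s\<rangle>\<close> is
  \<open>p[P(h\<^sub>1 \<or> h\<^sub>2)] - p[P h\<^sub>1] - p[P h\<^sub>2] + p[P(h\<^sub>1 \<and> h\<^sub>2)]\<close>, so the quantity \<open>S\<close> is
  exactly \<open>a + b\<close> with \<open>a = p[P(h\<^sub>1 \<or> h\<^sub>2)]\<close> and \<open>b = p[P(h\<^sub>1 \<and> h\<^sub>2)]\<close>.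
  Since \<open>h\<^sub>1 \<and> h\<^sub>2 \<subseteq> h\<^sub>1 \<or> h\<^sub>2\<close> and \<open>p[P h] = \<parallel>P h s\<parallel>\<^sup>2\<close> is monotone in \<open>h\<close>,
  we have \<open>0 \<le> b \<le> a\<close>, and both bounds become the elementary
  \<open>a \<le> a + b\<close> and \<open>(a + b)\<^sup>2 \<le> a (a + 3b)\<close>. In each of the three special situations
  \<open>\<DD>(h\<^sub>1,h\<^sub>2)\<close> vanishes (on \<open>s\<close>), so \<open>p[P h\<^sub>1] + p[P h\<^sub>2] = S\<close> and the classical
  inequalities are the same two bounds.\<close>

lemma inner_vec_eq_Re_cinner: "(x::complex^'n) \<bullet> y = Re (cinner x y)"
  unfolding inner_vec_def cinner_def by (simp add: Re_sum inner_complex_def)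

lemma cinner_add_right: "cinner x (y + z) = cinner x y + cinner x z"
  unfolding cinner_def by (simp add: distrib_left sum.distrib)

lemma cinner_diff_right: "cinner x (y - z) = cinner x y - cinner x z"
  unfolding cinner_def by (simp add: right_diff_distrib sum_subtractf)

lemma cinner_add_left: "cinner (x + y) z = cinner x z + cinner y z"
  unfolding cinner_def by (simp add: distrib_right sum.distrib)

lemma cinner_scale_left: "cinner (c *s x) y = cnj c * cinner x y"
  unfolding cinner_def by (simp add: sum_distrib_left mult.assoc)

lemma cinner_self_eq_0: "cinner x x = 0 \<Longrightarrow> x = 0"
proof -
  assume "cinner x x = 0"
  then have "x \<bullet> x = 0" by (simp add: inner_vec_eq_Re_cinner)
  then show ?thesis by simp
qed

lemma cinner_zero_left [simp]: "cinner 0 x = 0"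
  and cinner_zero_right [simp]: "cinner x 0 = 0"
  unfolding cinner_def by simp_all

lemma scaleR_eq_vector_scalar_mult: "(c::real) *\<^sub>R (x::complex^'n) = complex_of_real c *s x"
proof -
  have "\<And>z::complex. c *\<^sub>R z = of_real c * z" by (rule scaleR_conv_of_real)
  then show ?thesis by (simp only: vec_eq_iff vector_scaleR_component vector_smult_component) simp
qed

lemma csubspace_0: "csubspace h \<Longrightarrow> 0 \<in> h"
  and csubspace_add: "csubspace h \<Longrightarrow> x \<in> h \<Longrightarrow> y \<in> h \<Longrightarrow> x + y \<in> h"
  and csubspace_scale: "csubspace h \<Longrightarrow> x \<in> h \<Longrightarrow> c *s x \<in> h"
  unfolding csubspace_def by blast+

lemma csubspace_diff:
  assumes "csubspace h" "x \<in> h" "y \<in> h" shows "x - y \<in> h"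
proof -
  have "(-1) *s y \<in> h" using assms by (intro csubspace_scale)
  then show ?thesis using assms csubspace_add[of h x "(-1) *s y"] by (simp add: vec_eq_iff)
qed

lemma csubspace_imp_subspace: "csubspace h \<Longrightarrow> subspace h"
  unfolding subspace_def
  by (auto simp: scaleR_eq_vector_scalar_mult intro: csubspace_0 csubspace_add csubspace_scale)

lemma csubspace_smeet: "csubspace a \<Longrightarrow> csubspace b \<Longrightarrow> csubspace (smeet a b)"
  unfolding smeet_def csubspace_def by blast

lemma csubspace_sjoin: "csubspace (sjoin a b)"
  unfolding sjoin_def by (rule hull_in) (simp add: csubspace_def)

lemma sjoin_upper1: "a \<subseteq> sjoin a b"
  and sjoin_upper2: "b \<subseteq> sjoin a b"
  unfolding sjoin_def using hull_subset[of "a \<union> b" csubspace] by auto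

lemma smeet_le_sjoin: "smeet a b \<subseteq> sjoin a b"
  using sjoin_upper1 unfolding smeet_def by blast

lemma orth_antimono: "a \<subseteq> b \<Longrightarrow> orth b \<subseteq> orth a"
  unfolding orth_def by auto

lemma orth_add: "x \<in> orth h \<Longrightarrow> y \<in> orth h \<Longrightarrow> x + y \<in> orth h"
  and orth_diff: "x \<in> orth h \<Longrightarrow> y \<in> orth h \<Longrightarrow> x - y \<in> orth h"
  unfolding orth_def by (simp_all add: cinner_add_right cinner_diff_right)

text \<open>Complex orthogonality to a complex subspace already follows from real orthogonality,
  by testing against \<open>y\<close> and \<open>\<i> y\<close>.\<close>
lemma mem_orth_iff_inner:
  assumes "csubspace h"
  shows "x \<in> orth h \<longleftrightarrow> (\<forall>y\<in>h. y \<bullet> x = 0)"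
proof
  assume "x \<in> orth h"
  then show "\<forall>y\<in>h. y \<bullet> x = 0" by (simp add: orth_def inner_vec_eq_Re_cinner)
next
  assume real_orth: "\<forall>y\<in>h. y \<bullet> x = 0"
  show "x \<in> orth h" unfolding orth_def
  proof safe
    fix y assume y: "y \<in> h"
    have "Re (cinner y x) = 0" using real_orth y by (simp add: inner_vec_eq_Re_cinner)
    moreover have "Re (cinner (\<i> *s y) x) = 0"
      using real_orth csubspace_scale[OF assms y] by (simp add: inner_vec_eq_Re_cinner)
    then have "Im (cinner y x) = 0" by (simp add: cinner_scale_left)
    ultimately show "cinner y x = 0" by (simp add: complex_eq_iff)
  qed
qed

lemma orth_sjoin:
  assumes "z \<in> orth a" "z \<in> orth b" shows "z \<in> orth (sjoin a b)"
proof -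
  have "csubspace {w. cinner w z = 0}"
    unfolding csubspace_def by (auto simp: cinner_add_left cinner_scale_left)
  moreover have "a \<union> b \<subseteq> {w. cinner w z = 0}" using assms by (auto simp: orth_def)
  ultimately have "sjoin a b \<subseteq> {w. cinner w z = 0}"
    unfolding sjoin_def by (rule hull_minimal[rotated])
  then show ?thesis by (auto simp: orth_def)
qed

lemma proj_exists:
  assumes "csubspace h" shows "\<exists>y\<in>h. x - y \<in> orth h"
proof -
  have span: "span h = h" using csubspace_imp_subspace[OF assms] by (simp add: span_eq_iff)
  obtain y z where "y \<in> span h" "\<And>w. w \<in> span h \<Longrightarrow> orthogonal z w" "x = y + z"
    using orthogonal_subspace_decomp_exists[of h x] by blast
  then show ?thesis using span
    by (auto simp: mem_orth_iff_inner[OF assms] orthogonal_def inner_commute intro!: bexI[of _ y])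
qed

lemma proj_unique:
  assumes "csubspace h" "y \<in> h" "x - y \<in> orth h" "y' \<in> h" "x - y' \<in> orth h"
  shows "y = y'"
proof -
  have "y - y' \<in> h" using assms csubspace_diff by blast
  then have "cinner (y - y') (x - y') - cinner (y - y') (x - y) = 0"
    using assms by (simp add: orth_def)
  then have "cinner (y - y') (y - y') = 0" by (simp add: cinner_diff_right)
  then show ?thesis by (rule cinner_self_eq_0[THEN eq_iff_diff_eq_0[THEN iffD2]])
qed

lemma proj_eqI: "csubspace h \<Longrightarrow> y \<in> h \<Longrightarrow> x - y \<in> orth h \<Longrightarrow> proj h x = y"
  unfolding proj_def by (rule the_equality) (auto intro: proj_unique)

lemma proj_in: "csubspace h \<Longrightarrow> proj h x \<in> h"
  and residual_in_orth: "csubspace h \<Longrightarrow> x - proj h x \<in> orth h"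
  using proj_exists[of h x] proj_eqI[of h _ x] by force+

lemma proj_fixes: "csubspace h \<Longrightarrow> x \<in> h \<Longrightarrow> proj h x = x"
  by (rule proj_eqI) (simp_all add: orth_def)

lemma proj_orth_eq_0: "csubspace h \<Longrightarrow> x \<in> orth h \<Longrightarrow> proj h x = 0"
  by (rule proj_eqI) (simp_all add: csubspace_0)

lemma pythagoras_residual:
  assumes "csubspace h" "y \<in> h"
  shows "(norm (x - y))\<^sup>2 = (norm (x - proj h x))\<^sup>2 + (norm (proj h x - y))\<^sup>2"
proof -
  have "proj h x - y \<in> h" using assms proj_in csubspace_diff by blast
  then have "(proj h x - y) \<bullet> (x - proj h x) = 0"
    using residual_in_orth[OF assms(1), of x] mem_orth_iff_inner[OF assms(1)] by blast
  then have "orthogonal (x - proj h x) (proj h x - y)"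
    by (simp add: orthogonal_def inner_commute)
  then have "(norm ((x - proj h x) + (proj h x - y)))\<^sup>2
      = (norm (x - proj h x))\<^sup>2 + (norm (proj h x - y))\<^sup>2"
    by (rule norm_add_Pythagorean)
  then show ?thesis by simp
qed

lemma pr_eq_norm_proj:
  assumes "csubspace h" shows "pr h s = (norm (proj h s))\<^sup>2"
proof -
  have "proj h s \<bullet> (s - proj h s) = 0"
    using proj_in[OF assms] residual_in_orth[OF assms] by (simp add: mem_orth_iff_inner[OF assms])
  then show ?thesis
    by (simp add: pr_def power2_norm_eq_inner inner_vec_eq_Re_cinner[symmetric]
        inner_diff_right inner_commute)
qed

lemma pr_eq_norm_diff_residual:
  assumes "csubspace h" shows "pr h s = (norm s)\<^sup>2 - (norm (s - proj h s))\<^sup>2"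
  using pythagoras_residual[OF assms csubspace_0[OF assms], of s] pr_eq_norm_proj[OF assms]
  by simp

lemma pr_nonneg: "csubspace h \<Longrightarrow> 0 \<le> pr h s"
  by (simp add: pr_eq_norm_proj)

lemma pr_mono:
  assumes "csubspace g" "csubspace h" "g \<subseteq> h"
  shows "pr g s \<le> pr h s"
proof -
  have "proj g s \<in> h" using assms proj_in by blast
  then have "(norm (s - proj h s))\<^sup>2 \<le> (norm (s - proj g s))\<^sup>2"
    using pythagoras_residual[OF assms(2), of "proj g s" s] by simp
  then show ?thesis using assms by (simp add: pr_eq_norm_diff_residual)
qed

lemma Re_cinner_Dop:
  "Re (cinner s (Dop h1 h2 s)) = pr (sjoin h1 h2) s - pr h1 s - pr h2 s + pr (smeet h1 h2) s"
  unfolding Dop_def pr_def by (simp add: cinner_add_right cinner_diff_right)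

lemma proj_smeet_if_commute:
  assumes h1: "csubspace h1" and h2: "csubspace h2"
    and comm: "proj h1 (proj h2 x) = proj h2 (proj h1 x)"
  shows "proj (smeet h1 h2) x = proj h1 (proj h2 x)"
proof (rule proj_eqI[OF csubspace_smeet[OF h1 h2]])
  show "proj h1 (proj h2 x) \<in> smeet h1 h2"
    using proj_in[OF h1, of "proj h2 x"] proj_in[OF h2, of "proj h1 x"]
    unfolding smeet_def comm by blast
  have "orth h1 \<subseteq> orth (smeet h1 h2)" "orth h2 \<subseteq> orth (smeet h1 h2)"
    by (intro orth_antimono; auto simp: smeet_def)+
  then have "(x - proj h2 x) + (proj h2 x - proj h1 (proj h2 x)) \<in> orth (smeet h1 h2)"
    using residual_in_orth[OF h1] residual_in_orth[OF h2] by (blast intro: orth_add)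
  then show "x - proj h1 (proj h2 x) \<in> orth (smeet h1 h2)" by (simp add: algebra_simps)
qed

lemma proj_sjoin_if_commute:
  assumes h1: "csubspace h1" and h2: "csubspace h2"
    and comm: "proj h1 (proj h2 x) = proj h2 (proj h1 x)"
  shows "proj (sjoin h1 h2) x = proj h1 x + proj h2 x - proj h1 (proj h2 x)"
    (is "_ = ?y")
proof (rule proj_eqI[OF csubspace_sjoin])
  show "?y \<in> sjoin h1 h2"
    using proj_in[OF h1] proj_in[OF h2] sjoin_upper1 sjoin_upper2
    by (blast intro: csubspace_diff csubspace_add csubspace_sjoin)
  have "(x - proj h1 x) - (proj h2 x - proj h1 (proj h2 x)) \<in> orth h1"
    by (intro orth_diff residual_in_orth h1)
  then have "x - ?y \<in> orth h1" by (simp add: algebra_simps)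
  moreover have "(x - proj h2 x) - (proj h1 x - proj h2 (proj h1 x)) \<in> orth h2"
    by (intro orth_diff residual_in_orth h2)
  then have "x - ?y \<in> orth h2" using comm by (simp add: algebra_simps)
  ultimately show "x - ?y \<in> orth (sjoin h1 h2)" by (rule orth_sjoin)
qed

lemma Dop_eq_0_if_commute:
  assumes "csubspace h1" "csubspace h2" "proj h1 \<circ> proj h2 = proj h2 \<circ> proj h1"
  shows "Dop h1 h2 x = 0"
proof -
  have "proj h1 (proj h2 x) = proj h2 (proj h1 x)" using assms(3) by (metis comp_apply)
  then show ?thesis
    using assms by (simp add: Dop_def proj_smeet_if_commute proj_sjoin_if_commute)
qed

lemma Dop_eq_0_if_in_smeet:
  assumes "csubspace h1" "csubspace h2" "s \<in> smeet h1 h2"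
  shows "Dop h1 h2 s = 0"
proof -
  have "s \<in> h1" "s \<in> h2" "s \<in> sjoin h1 h2"
    using assms(3) smeet_le_sjoin[of h1 h2] by (auto simp: smeet_def)
  then show ?thesis using assms by (simp add: Dop_def proj_fixes csubspace_sjoin csubspace_smeet)
qed

lemma Dop_eq_0_if_in_orth_sjoin:
  assumes "csubspace h1" "csubspace h2" "s \<in> orth (sjoin h1 h2)"
  shows "Dop h1 h2 s = 0"
proof -
  have vanish: "proj h s = 0" if "csubspace h" "h \<subseteq> sjoin h1 h2" for h
    using that assms(3) orth_antimono by (blast intro: proj_orth_eq_0)
  show ?thesis
    using vanish[OF assms(1) sjoin_upper1] vanish[OF assms(2) sjoin_upper2]
      vanish[OF csubspace_sjoin subset_refl] vanish[OF csubspace_smeet[OF assms(1,2)] smeet_le_sjoin]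
    by (simp add: Dop_def)
qed

lemma chung_erdos_bound:
  fixes a b :: real
  assumes "0 \<le> b" "b \<le> a" "0 < a + 3 * b"
  shows "(a + b)\<^sup>2 / (a + b + 2 * b) \<le> a"
proof -
  have "(a + b)\<^sup>2 = a * (a + 3 * b) - b * (a - b)" by (simp add: power2_eq_square algebra_simps)
  also have "\<dots> \<le> a * (a + 3 * b)" using assms by simp
  finally show ?thesis using assms by (simp add: divide_le_eq algebra_simps)
qed

theorem mainTheorem3:
  fixes h1 h2 :: "(complex^'n) set" and s :: "complex^'n" and S :: real
  assumes "csubspace h1" and "csubspace h2" and "cinner s s = 1"
  defines "S \<equiv> pr h1 s + pr h2 s + Re (cinner s (Dop h1 h2 s))"
  shows "pr (sjoin h1 h2) s \<le> S
    \<and> (pr (sjoin h1 h2) s > 0 \<longrightarrow> S\<^sup>2 / (S + 2 * pr (smeet h1 h2) s) \<le> pr (sjoin h1 h2) s)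
    \<and> ((proj h1 \<circ> proj h2 = proj h2 \<circ> proj h1 \<or> s \<in> smeet h1 h2 \<or> s \<in> orth (sjoin h1 h2)) \<longrightarrow>
        cinner s (Dop h1 h2 s) = 0
        \<and> pr (sjoin h1 h2) s \<le> pr h1 s + pr h2 s
        \<and> (pr h1 s + pr h2 s + 2 * pr (smeet h1 h2) s > 0 \<longrightarrow>
             (pr h1 s + pr h2 s)\<^sup>2 / (pr h1 s + pr h2 s + 2 * pr (smeet h1 h2) s) \<le> pr (sjoin h1 h2) s))"
proof -
  define a where "a = pr (sjoin h1 h2) s"
  define b where "b = pr (smeet h1 h2) s"
  have b: "0 \<le> b" "b \<le> a"
    using assms(1,2) smeet_le_sjoin unfolding a_def b_def
    by (auto intro: pr_nonneg pr_mono csubspace_smeet csubspace_sjoin)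
  have S: "S = a + b" unfolding S_def a_def b_def Re_cinner_Dop by simp
  have classical: "Dop h1 h2 s = 0 \<and> pr h1 s + pr h2 s = S"
    if "proj h1 \<circ> proj h2 = proj h2 \<circ> proj h1 \<or> s \<in> smeet h1 h2 \<or> s \<in> orth (sjoin h1 h2)"
  proof -
    have "Dop h1 h2 s = 0"
      using that assms(1,2) Dop_eq_0_if_commute Dop_eq_0_if_in_smeet Dop_eq_0_if_in_orth_sjoin
      by blast
    then show ?thesis by (simp add: S_def)
  qed
  show ?thesis
    using chung_erdos_bound[OF b] b classical unfolding S a_def[symmetric] b_def[symmetric]
    by auto
qed

end
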